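(* Let $X$ be a set and $f=(f_1,\ldots,f_m):X\to\mathbb{R}^m$ a mapping, $M=\{1,\ldots,m\}$. If the free disposal hull $f(X)+\mathbb{R}^m_{\geq0}$ is convex, then the following are equivalent: $(\alpha)$ $\mathrm{WE}(f,X)=\mathrm{E}(f,X)$; $(\beta)$ $\displaystyle\bigcup_{\emptyset\neq I\subseteq M}\mathrm{E}(f_I,X)\subseteq\mathrm{E}(f,X)$.
   Context: Let $M=\{1,\ldots,m\}$. For a nonempty $I\subseteq M$ and $y,y'\in\mathbb{R}^m$: $y\lneq_I y'$ means $y_i\leq y'_i$ for all $i\in I$ and $y_j<y'_j$ for some $j\in I$; $y<_I y'$ means $y_i<y'_i$ for all $i\in I$. For $Y\subseteq\mathbb{R}^m$, $\mathrm{M}_I Y$ (resp. $\mathrm{WM}_I Y$) is the set of all $y'\in Y$ for which there is no $y\in Y$ with $y\lneq_I y'$ (resp. $y<_I y'$). For $f=(f_1,\ldots,f_m):X\to\mathbb{R}^m$ and $I=\{i_1<\cdots<i_k\}$, $f_I=(f_{i_1},\ldots,f_{i_k})$, and $\mathrm{E}(f_I,X)=f^{-1}(\mathrm{M}_I f(X))$ (efficient solutions), $\mathrm{WE}(f_I,X)=f^{-1}(\mathrm{WM}_I f(X))$ (weakly efficient solutions); $\mathrm{E}(f,X)=\mathrm{E}(f_M,X)$, $\mathrm{WE}(f,X)=\mathrm{WE}(f_M,X)$. $\mathbb{R}^m_{\geq0}$ is the nonnegative orthant, and the free disposal hull of $Z\subseteq\mathbb{R}^m$ is $Z+\mathbb{R}^m_{\geq0}$.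 *)

theory Defs
  imports "HOL-Analysis.Analysis"
begin

text \<open>Vectors in R^m are modelled as real ^ 'm with a finite index type 'm;
  the index set M = {1..m} corresponds to UNIV :: 'm set.\<close>

definition lneq_on :: "'m set \<Rightarrow> real ^ 'm \<Rightarrow> real ^ 'm \<Rightarrow> bool" where
  "lneq_on I y y' \<longleftrightarrow> (\<forall>i\<in>I. y $ i \<le> y' $ i) \<and> (\<exists>j\<in>I. y $ j < y' $ j)"

definition lt_on :: "'m set \<Rightarrow> real ^ 'm \<Rightarrow> real ^ 'm \<Rightarrow> bool" where
  "lt_on I y y' \<longleftrightarrow> (\<forall>i\<in>I. y $ i < y' $ i)"

definition min_set :: "'m set \<Rightarrow> (real ^ 'm) set \<Rightarrow> (real ^ 'm) set" where
  "min_set I Y = {y'\<in>Y. \<not> (\<exists>y\<in>Y. lneq_on I y y')}"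

definition wmin_set :: "'m set \<Rightarrow> (real ^ 'm) set \<Rightarrow> (real ^ 'm) set" where
  "wmin_set I Y = {y'\<in>Y. \<not> (\<exists>y\<in>Y. lt_on I y y')}"

definition eff :: "('a \<Rightarrow> real ^ 'm) \<Rightarrow> 'm set \<Rightarrow> 'a set \<Rightarrow> 'a set" where
  "eff f I X = {x\<in>X. f x \<in> min_set I (f ` X)}"

definition weff :: "('a \<Rightarrow> real ^ 'm) \<Rightarrow> 'm set \<Rightarrow> 'a set \<Rightarrow> 'a set" where
  "weff f I X = {x\<in>X. f x \<in> wmin_set I (f ` X)}"

definition nonneg_orthant :: "(real ^ 'm) set" where
  "nonneg_orthant = {d. \<forall>i. 0 \<le> d $ i}"

definition free_disposal_hull :: "(real ^ 'm) set \<Rightarrow> (real ^ 'm) set" where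
  "free_disposal_hull Z = {z + d | z d. z \<in> Z \<and> d \<in> nonneg_orthant}"

end

theory Submission
  imports Defs
begin

text \<open>Efficiency with respect to any nonempty I implies weak efficiency, so (\<alpha>) gives (\<beta>).
  Conversely, a weakly efficient value f(x0) has the open orthant strictly below it disjoint
  from the convex free disposal hull of f(X). A separating hyperplane yields a normal
  a \<noteq> 0, nonnegative because the hull is closed upwards, such that x0 minimizes \<langle>a, f x\<rangle>
  over X. Such a minimizer is efficient for f restricted to I = {i. a i > 0}, so (\<beta>)
  forces it to be efficient.\<close>

lemma eff_subset_weff:
  assumes "I \<noteq> {}"
  shows "eff f I X \<subseteq> weff f UNIV X"
proof
  fix x assume x: "x \<in> eff f I X"
  from assms obtain j where "j \<in> I" by blast
  then have "lt_on UNIV y (f x) \<Longrightarrow> lneq_on I y (f x)" for y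
    unfolding lt_on_def lneq_on_def by (auto intro: less_imp_le)
  with x show "x \<in> weff f UNIV X"
    unfolding eff_def weff_def min_set_def wmin_set_def by blast
qed

lemma free_disposal_hullI:
  assumes "z \<in> Z" "\<And>i. 0 \<le> d $ i"
  shows "z + d \<in> free_disposal_hull Z"
  using assms unfolding free_disposal_hull_def nonneg_orthant_def by blast

lemma subset_free_disposal_hull: "Z \<subseteq> free_disposal_hull Z"
  using free_disposal_hullI[where d = 0] by fastforce

lemma convex_strict_lower_orthant: "convex {z. lt_on UNIV z y}"
proof -
  have "{z. lt_on UNIV z y} = (\<Inter>i. {z. inner (axis i 1) z < y $ i})"
    unfolding lt_on_def by (auto simp: inner_axis')
  then show ?thesis by (auto intro: convex_INT convex_halfspace_lt)
qed

lemma weff_imp_strict_lower_orthant_disjoint: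
  assumes "x\<^sub>0 \<in> weff f UNIV X"
  shows "{z. lt_on UNIV z (f x\<^sub>0)} \<inter> free_disposal_hull (f ` X) = {}"
proof -
  have "\<not> lt_on UNIV (f x + d) (f x\<^sub>0)" if "x \<in> X" "\<forall>i. 0 \<le> d $ i" for x d
  proof
    assume "lt_on UNIV (f x + d) (f x\<^sub>0)"
    with that have "lt_on UNIV (f x) (f x\<^sub>0)"
      unfolding lt_on_def by (smt (verit) vector_add_component)
    with assms \<open>x \<in> X\<close> show False unfolding weff_def wmin_set_def by blast
  qed
  then show ?thesis unfolding free_disposal_hull_def nonneg_orthant_def by blast
qed

lemma nonneg_if_bounded_below_on_ray:
  fixes b c k :: real
  assumes "\<And>t. 0 \<le> t \<Longrightarrow> b \<le> c + t * k"
  shows "0 \<le> k"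
proof (rule ccontr)
  assume "\<not> 0 \<le> k"
  have "b \<le> c" using assms[of 0] by simp
  define t where "t = (c - b) / - k + 1"
  have "0 \<le> t" using \<open>b \<le> c\<close> \<open>\<not> 0 \<le> k\<close> by (simp add: t_def divide_nonneg_pos)
  moreover have "c + t * k = b + k" using \<open>\<not> 0 \<le> k\<close> by (simp add: t_def field_simps)
  ultimately show False using assms[of t] \<open>\<not> 0 \<le> k\<close> by linarith
qed

lemma normal_nonneg_if_bounded_below_on_free_disposal_hull:
  assumes "Z \<noteq> {}" "\<forall>w\<in>free_disposal_hull Z. b \<le> inner a w"
  shows "0 \<le> a $ i"
proof -
  from assms(1) obtain z where "z \<in> Z" by blast
  have "b \<le> inner a z + t * a $ i" if "0 \<le> t" for t
  proof -
    have "z + t *\<^sub>R axis i 1 \<in> free_disposal_hull Z"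
      using \<open>z \<in> Z\<close> that by (intro free_disposal_hullI) (simp_all add: axis_def)
    with assms(2) show ?thesis by (fastforce simp: inner_add_right inner_axis)
  qed
  then show ?thesis by (rule nonneg_if_bounded_below_on_ray)
qed

lemma inner_le_if_le_on_strict_lower_orthant:
  assumes nonneg: "\<And>i. 0 \<le> a $ i" and le: "\<And>z. lt_on UNIV z y \<Longrightarrow> inner a z \<le> b"
  shows "inner a y \<le> b"
proof (rule field_le_epsilon)
  fix e :: real assume "0 < e"
  define s where "s = inner a 1"
  have "0 \<le> s" unfolding s_def inner_vec_def using nonneg by (simp add: sum_nonneg)
  define t where "t = e / (s + 1)"
  have "0 < t" using \<open>0 < e\<close> \<open>0 \<le> s\<close> by (simp add: t_def)
  have "t * s \<le> e"
    using \<open>0 < e\<close> \<open>0 \<le> s\<close> by (simp add: t_def field_simps)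
  have "inner a (y - t *\<^sub>R 1) \<le> b" using \<open>0 < t\<close> by (intro le) (simp add: lt_on_def)
  then have "inner a y - t * s \<le> b" by (simp add: inner_diff_right s_def)
  with \<open>t * s \<le> e\<close> show "inner a y \<le> b + e" by linarith
qed

lemma weff_minimizes_nonneg_functional:
  fixes f :: "'a \<Rightarrow> real ^ 'm"
  assumes cvx: "convex (free_disposal_hull (f ` X))" and x\<^sub>0: "x\<^sub>0 \<in> weff f UNIV X"
  obtains a where "a \<noteq> 0" "\<And>i. 0 \<le> a $ i" "\<And>x. x \<in> X \<Longrightarrow> inner a (f x\<^sub>0) \<le> inner a (f x)"
proof -
  let ?B = "{z. lt_on UNIV z (f x\<^sub>0)}" and ?A = "free_disposal_hull (f ` X)"
  have "f x\<^sub>0 - 1 \<in> ?B" by (simp add: lt_on_def)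
  moreover have "f x\<^sub>0 \<in> ?A" "x\<^sub>0 \<in> X"
    using x\<^sub>0 subset_free_disposal_hull unfolding weff_def by blast+
  ultimately obtain a b where "a \<noteq> 0" and B: "\<forall>z\<in>?B. inner a z \<le> b"
    and A: "\<forall>w\<in>?A. b \<le> inner a w"
    using separating_hyperplane_sets[OF convex_strict_lower_orthant cvx _ _
        weff_imp_strict_lower_orthant_disjoint[OF x\<^sub>0]]
    by blast
  have nonneg: "0 \<le> a $ i" for i
    using \<open>x\<^sub>0 \<in> X\<close> by (intro normal_nonneg_if_bounded_below_on_free_disposal_hull[OF _ A]) blast
  have "inner a (f x\<^sub>0) \<le> b"
    by (rule inner_le_if_le_on_strict_lower_orthant[OF nonneg]) (use B in blast)
  have min: "inner a (f x\<^sub>0) \<le> inner a (f x)" if "x \<in> X" for x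
  proof -
    have "f x \<in> ?A" using that subset_free_disposal_hull by blast
    with A have "b \<le> inner a (f x)" by blast
    with \<open>inner a (f x\<^sub>0) \<le> b\<close> show ?thesis by linarith
  qed
  show ?thesis by (rule that[OF \<open>a \<noteq> 0\<close> nonneg min])
qed

lemma inner_strict_mono_lneq_on_positive_support:
  assumes nonneg: "\<And>i. 0 \<le> a $ i" and "lneq_on {i. 0 < a $ i} y y'"
  shows "inner a y < inner a y'"
proof -
  have "a $ i * y $ i \<le> a $ i * y' $ i" for i
  proof (cases "0 < a $ i")
    case True with assms(2) show ?thesis unfolding lneq_on_def by (simp add: mult_left_mono)
  next
    case False with nonneg[of i] show ?thesis by simp
  qed
  moreover from assms(2) obtain j where "0 < a $ j" "y $ j < y' $ j"
    unfolding lneq_on_def by blast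
  then have "a $ j * y $ j < a $ j * y' $ j" by simp
  ultimately have "(\<Sum>i\<in>UNIV. a $ i * y $ i) < (\<Sum>i\<in>UNIV. a $ i * y' $ i)"
    by (intro sum_strict_mono_ex1) auto
  then show ?thesis by (simp add: inner_vec_def)
qed

lemma minimizer_in_eff_positive_support:
  fixes f :: "'a \<Rightarrow> real ^ 'm"
  assumes nonneg: "\<And>i. 0 \<le> a $ i" and "x\<^sub>0 \<in> X"
    and min: "\<And>x. x \<in> X \<Longrightarrow> inner a (f x\<^sub>0) \<le> inner a (f x)"
  shows "x\<^sub>0 \<in> eff f {i. 0 < a $ i} X"
proof -
  have "\<not> lneq_on {i. 0 < a $ i} (f x) (f x\<^sub>0)" if "x \<in> X" for x
    using inner_strict_mono_lneq_on_positive_support[OF nonneg] min[OF that] by (meson not_less)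
  with \<open>x\<^sub>0 \<in> X\<close> show ?thesis unfolding eff_def min_set_def by blast
qed

lemma positive_support_nonempty:
  fixes a :: "real ^ 'm"
  assumes "a \<noteq> 0" "\<And>i. 0 \<le> a $ i"
  shows "{i. 0 < a $ i} \<noteq> {}"
proof -
  from assms(1) obtain i where "a $ i \<noteq> 0" by (auto simp: vec_eq_iff)
  with assms(2)[of i] have "0 < a $ i" by (metis order_le_neq_trans)
  then show ?thesis by blast
qed

lemma weff_subset_Union_eff:
  assumes "convex (free_disposal_hull (f ` X))"
  shows "weff f UNIV X \<subseteq> (\<Union>I\<in>{I. I \<noteq> {}}. eff f I X)"
proof
  fix x\<^sub>0 assume x\<^sub>0: "x\<^sub>0 \<in> weff f UNIV X"
  then have "x\<^sub>0 \<in> X" unfolding weff_def by blast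
  obtain a where "a \<noteq> 0" and nonneg: "\<And>i. 0 \<le> a $ i"
    and min: "\<And>x. x \<in> X \<Longrightarrow> inner a (f x\<^sub>0) \<le> inner a (f x)"
    using weff_minimizes_nonneg_functional[OF assms x\<^sub>0] by metis
  have "{i. 0 < a $ i} \<in> {I. I \<noteq> {}}"
    using positive_support_nonempty[OF \<open>a \<noteq> 0\<close> nonneg] by simp
  moreover have "x\<^sub>0 \<in> eff f {i. 0 < a $ i} X"
    using nonneg \<open>x\<^sub>0 \<in> X\<close> min by (rule minimizer_in_eff_positive_support)
  ultimately show "x\<^sub>0 \<in> (\<Union>I\<in>{I. I \<noteq> {}}. eff f I X)" by (rule UN_I)
qed

theorem proposition2p3:
  fixes X :: "'a set" and f :: "'a \<Rightarrow> real ^ 'm"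
  assumes "convex (free_disposal_hull (f ` X))"
  shows "weff f UNIV X = eff f UNIV X \<longleftrightarrow>
         (\<Union>I\<in>{I. I \<noteq> {}}. eff f I X) \<subseteq> eff f UNIV X"
proof
  assume "weff f UNIV X = eff f UNIV X"
  then show "(\<Union>I\<in>{I. I \<noteq> {}}. eff f I X) \<subseteq> eff f UNIV X"
    using eff_subset_weff[of _ f X] by (intro UN_least) simp
next
  assume "(\<Union>I\<in>{I. I \<noteq> {}}. eff f I X) \<subseteq> eff f UNIV X"
  with weff_subset_Union_eff[OF assms] have "weff f UNIV X \<subseteq> eff f UNIV X"
    by (rule subset_trans)
  moreover have "eff f UNIV X \<subseteq> weff f UNIV X" by (rule eff_subset_weff) simp
  ultimately show "weff f UNIV X = eff f UNIV X" by (rule subset_antisym)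
qed

end
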